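(* Let $\theta\in\pi(\mathbb{Q}\setminus\mathbb{Z})$, $\mu\in\mathbb{C}\setminus\{0,1\}$ and $a,b\in\mathbb{C}^n$ with $a\neq b$, and let $G$ be the group generated by $f=(a,e^{i\theta})$ and $g=(b,\mu)$. Then $G(a)$ is closed and discrete in $\mathbb{C}^n$ if and only if $G\subset\mathcal{S}_2\mathcal{R}_n$ or $G\subset\mathcal{S}_3\mathcal{R}_n$.
   Context: For $c\in\mathbb{C}^n$ and $\nu\in\mathbb{C}\setminus\{0,1\}$, $(c,\nu)$ denotes the map $z\mapsto\nu(z-c)+c$ of $\mathbb{C}^n$. $H_2=(\frac{\pi}{2}+\pi\mathbb{Z})\cup\pi\mathbb{Z}$, $F_2=\{e^{ix}:x\in H_2\}$, $H_3=(\frac{\pi}{3}+\pi\mathbb{Z})\cup(-\frac{\pi}{3}+\pi\mathbb{Z})\cup\pi\mathbb{Z}$, $F_3=\{e^{ix}:x\in H_3\}$; for $i\in\{2,3\}$, $\mathcal{S}_i\mathcal{R}_n=\{z\mapsto\lambda z+v:\lambda\in F_i,\ v\in\mathbb{C}^n\}$. $G(a)=\{h(a):h\in G\}$. *)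

theory Defs
  imports "HOL-Analysis.Analysis"
begin

text \<open>The map (c,nu): z maps to nu (z - c) + c on C^n, with C^n rendered as complex ^ 'n.\<close>
definition dil :: "complex ^ 'n \<Rightarrow> complex \<Rightarrow> (complex ^ 'n \<Rightarrow> complex ^ 'n)" where
  "dil c \<nu> = (\<lambda>z. \<nu> *s (z - c) + c)"

inductive_set gen_group :: "('a \<Rightarrow> 'a) set \<Rightarrow> ('a \<Rightarrow> 'a) set" for S where
  gen_id: "id \<in> gen_group S"
| gen_base: "h \<in> S \<Longrightarrow> h \<in> gen_group S"
| gen_inv: "h \<in> S \<Longrightarrow> inv h \<in> gen_group S"
| gen_comp: "h1 \<in> gen_group S \<Longrightarrow> h2 \<in> gen_group S \<Longrightarrow> h1 \<circ> h2 \<in> gen_group S"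

definition H2 :: "real set" where
  "H2 = {pi / 2 + pi * of_int k | k. True} \<union> {pi * of_int k | k. True}"

definition F2 :: "complex set" where
  "F2 = (\<lambda>x. exp (\<i> * complex_of_real x)) ` H2"

definition H3 :: "real set" where
  "H3 = {pi / 3 + pi * of_int k | k. True} \<union> {- pi / 3 + pi * of_int k | k. True}
        \<union> {pi * of_int k | k. True}"

definition F3 :: "complex set" where
  "F3 = (\<lambda>x. exp (\<i> * complex_of_real x)) ` H3"

definition SR :: "complex set \<Rightarrow> (complex ^ 'n \<Rightarrow> complex ^ 'n) set" where
  "SR F = {(\<lambda>z. l *s z + v) | l v. l \<in> F}"

end

theory Submission
  imports Defs
begin

(* Proof of Proposition 3.4.  Put d = b - a.  Both generators f = (a, e^(i theta)) and
   g = (b, mu) are "line maps" z |-> l (z - a) + a + s d, which compose like the affine maps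
   w |-> l w + s of C.  So every element of G is such a map, G(a) = {a + s d}, and everything
   reduces to the parameters (l, s) occurring in G.

   (=>) The commutator f g f^-1 g^-1 is a nonzero translation.  The translation parameters of G
   form an additive group, finite on balls because G(a) is closed and discrete, and invariant
   under multiplication by every multiplier l.  Comparing with a shortest nonzero translation
   shows that every multiplier is "admissible"; applied to l and l^2 this puts l in F2 or F3
   (crystallographic restriction), and F2 and F3 cannot be mixed.
   (<=) If the multipliers lie in F2 (resp. F3), all parameters of G lie in the Gaussian
   (resp. Eisenstein) integers, whose nonzero elements have norm >= 1; so distinct orbit points
   are at distance >= |d| and G(a) is uniformly discrete. *)

lemma gen_group_subset:
  assumes "id \<in> M" and "S \<subseteq> M" and "inv ` S \<subseteq> M"
    and "\<And>h k. h \<in> M \<Longrightarrow> k \<in> M \<Longrightarrow> h \<circ> k \<in> M"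
  shows "gen_group S \<subseteq> M"
proof
  fix h assume "h \<in> gen_group S"
  then show "h \<in> M"
  proof induction
    case gen_id
    show ?case by (rule assms(1))
  next
    case (gen_base h)
    then show ?case using assms(2) by blast
  next
    case (gen_inv h)
    then show ?case using assms(3) by blast
  next
    case (gen_comp h1 h2)
    then show ?case using assms(4) by blast
  qed
qed

(* The generated group is closed under inversion as soon as its generators are
   bijections (the rules of gen_group only invert the generators themselves). *)
lemma gen_group_inv_closed:
  assumes bij: "\<And>h. h \<in> S \<Longrightarrow> bij h" and h: "h \<in> gen_group S"
  shows "inv h \<in> gen_group S"
proof -
  have "bij h \<and> inv h \<in> gen_group S" using h
  proof induction
    case gen_id
    show ?case by (simp only: inv_id bij_id gen_group.gen_id simp_thms)
  next
    case (gen_base h)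
    then show ?case using bij by (simp add: gen_group.gen_inv)
  next
    case (gen_inv h)
    then show ?case using bij by (simp add: bij_imp_bij_inv inv_inv_eq gen_group.gen_base)
  next
    case (gen_comp h1 h2)
    then show ?case by (metis bij_comp o_inv_distrib gen_group.gen_comp)
  qed
  then show ?thesis ..
qed

lemma norm_smult_vec: "norm (c *s (x :: complex^'n)) = norm c * norm x"
  unfolding norm_vec_def by (simp add: L2_set_right_distrib norm_mult)

(* line_map a d l s is z |-> l (z - a) + a + s d.  It preserves the complex line a + C d and
   acts on it as the affine map w |-> l w + s of C; both generators of G are of this form. *)
definition line_map :: "complex^'n \<Rightarrow> complex^'n \<Rightarrow> complex \<Rightarrow> complex \<Rightarrow> complex^'n \<Rightarrow> complex^'n"
  where "line_map a d l s = (\<lambda>z. l *s (z - a) + a + s *s d)"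

lemma line_map_comp: "line_map a d l s \<circ> line_map a d l' s' = line_map a d (l * l') (l * s' + s)"
  by (simp add: line_map_def fun_eq_iff vec_eq_iff algebra_simps)

lemma line_map_id: "line_map a d 1 0 = id"
  by (simp add: line_map_def fun_eq_iff vec_eq_iff)

lemma line_map_base: "line_map a d l s a = a + s *s d"
  by (simp add: line_map_def)

lemma line_map_inverse:
  assumes "l \<noteq> 0"
  shows "line_map a d l s \<circ> line_map a d (1/l) (- s/l) = id"
    and "line_map a d (1/l) (- s/l) \<circ> line_map a d l s = id"
  using assms by (simp_all add: line_map_comp line_map_id field_simps)

lemma bij_line_map: "l \<noteq> 0 \<Longrightarrow> bij (line_map a d l s)"
  using line_map_inverse by (blast intro: o_bij)

lemma inv_line_map: "l \<noteq> 0 \<Longrightarrow> inv (line_map a d l s) = line_map a d (1/l) (- s/l)"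
  using line_map_inverse by (rule inv_unique_comp)

lemma line_map_eq_iff:
  assumes "d \<noteq> 0"
  shows "line_map a d l s = line_map a d l' s' \<longleftrightarrow> l = l' \<and> s = s'"
proof
  assume eq: "line_map a d l s = line_map a d l' s'"
  have "s *s d = s' *s d" using fun_cong[OF eq, of a] by (simp add: line_map_def)
  then have "s = s'" using assms by simp
  moreover have "l *s d = l' *s d" using fun_cong[OF eq, of "a + d"] \<open>s = s'\<close> by (simp add: line_map_def)
  then have "l = l'" using assms by simp
  ultimately show "l = l' \<and> s = s'" by blast
qed simp

lemma dil_as_line_map:
  "dil a w = line_map a (b - a) w 0"
  "dil b m = line_map a (b - a) m (1 - m)"
  by (simp_all add: line_map_def dil_def fun_eq_iff vec_eq_iff algebra_simps)

lemma line_map_in_SR_iff: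
  assumes "d \<noteq> 0"
  shows "line_map a d l s \<in> SR F \<longleftrightarrow> l \<in> F"
proof
  assume "line_map a d l s \<in> SR F"
  then obtain l' v where eq: "line_map a d l s = (\<lambda>z. l' *s z + v)" and "l' \<in> F"
    unfolding SR_def by blast
  have "line_map a d l s (a + d) - line_map a d l s a = l' *s d"
    unfolding eq by (simp add: vec_eq_iff algebra_simps)
  then have "l *s d = l' *s d" by (simp add: line_map_def)
  with assms \<open>l' \<in> F\<close> show "l \<in> F" by simp
next
  assume "l \<in> F"
  have "line_map a d l s = (\<lambda>z. l *s z + (a - l *s a + s *s d))"
    by (simp add: line_map_def fun_eq_iff vec_eq_iff algebra_simps)
  with \<open>l \<in> F\<close> show "line_map a d l s \<in> SR F" unfolding SR_def by blast
qed

lemma gen_group_line_maps: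
  assumes "l1 \<noteq> 0" "l2 \<noteq> 0"
    and "P 1 0" "P l1 s1" "P l2 s2" "P (1/l1) (- s1/l1)" "P (1/l2) (- s2/l2)"
    and closed: "\<And>l s l' s'. P l s \<Longrightarrow> P l' s' \<Longrightarrow> P (l * l') (l * s' + s)"
    and "h \<in> gen_group {line_map a d l1 s1, line_map a d l2 s2}"
  obtains l s where "h = line_map a d l s" "P l s"
proof -
  let ?M = "{line_map a d l s | l s. P l s}"
  have "gen_group {line_map a d l1 s1, line_map a d l2 s2} \<subseteq> ?M"
  proof (rule gen_group_subset)
    have "line_map a d 1 0 \<in> ?M" using assms(3) by blast
    then show "id \<in> ?M" by (simp only: line_map_id)
    show "{line_map a d l1 s1, line_map a d l2 s2} \<subseteq> ?M" using assms(4,5) by blast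
    have "inv (line_map a d l1 s1) \<in> ?M" "inv (line_map a d l2 s2) \<in> ?M"
      unfolding inv_line_map[OF assms(1)] inv_line_map[OF assms(2)] using assms(6,7) by blast+
    then show "inv ` {line_map a d l1 s1, line_map a d l2 s2} \<subseteq> ?M" by blast
    show "h \<circ> k \<in> ?M" if hk: "h \<in> ?M" "k \<in> ?M" for h k
    proof -
      obtain l s l' s' where "h = line_map a d l s" "P l s" "k = line_map a d l' s'" "P l' s'"
        using hk by blast
      then have "h \<circ> k = line_map a d (l * l') (l * s' + s)" "P (l * l') (l * s' + s)"
        by (simp_all add: line_map_comp closed)
      then show ?thesis by blast
    qed
  qed
  with assms(9) that show ?thesis by blast
qed

(* zeta = e^(i pi/3), a primitive sixth root of unity. *)
definition zeta :: complex where "zeta = Complex (1/2) (sqrt 3 / 2)"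

lemma cis_add_pi_multiple: "cis (x + pi * of_int k) \<in> {cis x, - cis x}"
proof (cases "even k")
  case True
  then obtain m where "k = 2 * m" by blast
  then have "cis (x + pi * of_int k) = cis x * cis (2 * pi * of_int m)"
    by (simp add: cis_mult algebra_simps)
  then show ?thesis by simp
next
  case False
  then obtain m where "k = 2 * m + 1" using oddE by blast
  then have "x + pi * of_int k = (x + pi) + 2 * pi * of_int m" by (simp add: algebra_simps)
  then have "cis (x + pi * of_int k) = cis (x + pi) * cis (2 * pi * of_int m)"
    by (simp only: cis_mult)
  also have "\<dots> = - cis x" by (simp add: minus_cis)
  finally show ?thesis by simp
qed

lemma cis_pi_third: "cis (pi / 3) = zeta" "cis (- (pi / 3)) = 1 - zeta"
  by (simp_all add: zeta_def complex_eq_iff cos_60 sin_60)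

lemma F_as_cis: "F2 = cis ` H2" "F3 = cis ` H3"
  by (simp_all add: F2_def F3_def cis_conv_exp)

lemma F2_eq: "F2 = {1, -1, \<i>, -\<i>}"
proof
  show "F2 \<subseteq> {1, -1, \<i>, -\<i>}"
  proof
    fix z assume "z \<in> F2"
    then obtain x where "x \<in> H2" "z = cis x" by (auto simp: F_as_cis)
    then obtain k where "z = cis (pi / 2 + pi * of_int k) \<or> z = cis (0 + pi * of_int k)"
      by (auto simp: H2_def)
    then show "z \<in> {1, -1, \<i>, -\<i>}"
      using cis_add_pi_multiple[of "pi / 2" k] cis_add_pi_multiple[of 0 k] by auto
  qed
  have "cis (pi * of_int k) \<in> F2" "cis (pi / 2 + pi * of_int k) \<in> F2" for k
    by (auto simp: F_as_cis H2_def)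
  moreover have "1 = cis (pi * of_int 0)" "-1 = cis (pi * of_int 1)"
    "\<i> = cis (pi / 2 + pi * of_int 0)" "-\<i> = cis (pi / 2 + pi * of_int 1)"
    using minus_cis[of "pi / 2"] by simp_all
  ultimately show "{1, -1, \<i>, -\<i>} \<subseteq> F2" by (metis empty_subsetI insert_subset)
qed

lemma F3_eq: "F3 = {1, -1, zeta, - zeta, zeta - 1, 1 - zeta}"
proof
  show "F3 \<subseteq> {1, -1, zeta, - zeta, zeta - 1, 1 - zeta}"
  proof
    fix z assume "z \<in> F3"
    then obtain x where "x \<in> H3" "z = cis x" by (auto simp: F_as_cis)
    then obtain k where "z = cis (pi / 3 + pi * of_int k) \<or> z = cis (- (pi / 3) + pi * of_int k)
        \<or> z = cis (0 + pi * of_int k)"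
      by (auto simp: H3_def)
    then show "z \<in> {1, -1, zeta, - zeta, zeta - 1, 1 - zeta}"
      using cis_add_pi_multiple[of "pi / 3" k] cis_add_pi_multiple[of "- (pi / 3)" k]
        cis_add_pi_multiple[of 0 k] cis_pi_third by auto
  qed
  have "cis (pi * of_int k) \<in> F3" "cis (pi / 3 + pi * of_int k) \<in> F3"
    "cis (- (pi / 3) + pi * of_int k) \<in> F3" for k
    by (auto simp: F_as_cis H3_def)
  moreover have "1 = cis (pi * of_int 0)" "-1 = cis (pi * of_int 1)"
    "zeta = cis (pi / 3 + pi * of_int 0)" "- zeta = cis (pi / 3 + pi * of_int 1)"
    "1 - zeta = cis (- (pi / 3) + pi * of_int 0)" "zeta - 1 = cis (- (pi / 3) + pi * of_int 1)"
    using minus_cis[of "pi / 3"] minus_cis[of "- (pi / 3)"] by (simp_all add: cis_pi_third)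
  ultimately show "{1, -1, zeta, - zeta, zeta - 1, 1 - zeta} \<subseteq> F3"
    by (metis empty_subsetI insert_subset)
qed

(* A multiplier l of G is admissible if it is unimodular and, unless l = 1 or l = -1, satisfies
   |Re l| <= 1/2, i.e. |l - 1| >= 1 and |l + 1| >= 1: multiplying by l - 1 or l + 1 does not
   shorten a shortest translation of G. *)
definition admissible :: "complex \<Rightarrow> bool" where
  "admissible l \<longleftrightarrow> norm l = 1 \<and> (l = 1 \<or> l = -1 \<or> \<bar>Re l\<bar> \<le> 1/2)"

lemma norm_one_Re_Im: "norm l = 1 \<Longrightarrow> (Re l)^2 + (Im l)^2 = 1"
  by (metis cmod_power2 power_one)

(* For a unimodular l, |l - 1| >= 1 means Re l <= 1/2, and |l + 1| >= 1 means Re l >= -1/2. *)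
lemma admissibleI:
  assumes unit: "norm l = 1"
    and minus: "l \<noteq> 1 \<Longrightarrow> 1 \<le> norm (l - 1)" and plus: "l \<noteq> -1 \<Longrightarrow> 1 \<le> norm (l + 1)"
  shows "admissible l"
proof (cases "l = 1 \<or> l = -1")
  case True
  then show ?thesis using unit by (auto simp: admissible_def)
next
  case False
  have circle: "(Re l)^2 + (Im l)^2 = 1" using unit by (rule norm_one_Re_Im)
  have "1 \<le> (norm (l - 1))^2" using minus False by simp
  also have "\<dots> = (Re l - 1)^2 + (Im l)^2" by (simp add: cmod_power2)
  finally have "Re l \<le> 1/2" using circle by (simp add: power2_eq_square algebra_simps)
  moreover have "1 \<le> (norm (l + 1))^2" using plus False by simp
  then have "1 \<le> (Re l + 1)^2 + (Im l)^2" by (simp add: cmod_power2)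
  then have "- 1/2 \<le> Re l" using circle by (simp add: power2_eq_square algebra_simps)
  ultimately show ?thesis using unit by (auto simp: admissible_def)
qed

lemma admissible_square:
  assumes l: "admissible l" and l2: "admissible (l^2)"
  shows "l \<in> F2 \<union> F3"
proof -
  define x y where "x = Re l" and "y = Im l"
  have circle: "x^2 + y^2 = 1" using l norm_one_Re_Im unfolding admissible_def x_def y_def by blast
  have l_eq: "l = Complex x y" by (simp add: x_def y_def)
  have Re_sq: "Re (l^2) = x^2 - y^2" and Im_sq: "Im (l^2) = 2 * x * y"
    by (simp_all add: l_eq power2_eq_square)
  consider "l = 1" | "l = -1" | "\<bar>x\<bar> \<le> 1/2" using l unfolding admissible_def x_def by blast
  then show ?thesis
  proof cases
    case 3
    consider "l^2 = 1" | "l^2 = -1" | "\<bar>x^2 - y^2\<bar> \<le> 1/2"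
      using l2 Re_sq unfolding admissible_def by metis
    then show ?thesis
    proof cases
      case 1
      then have "x^2 = 1" using Re_sq circle by simp
      with 3 show ?thesis by (auto simp: power2_eq_1_iff)
    next
      case 2
      then have "x^2 - y^2 = -1" "x * y = 0" using Re_sq Im_sq by simp_all
      then have "x = 0" using circle by (auto simp: power2_eq_square)
      then have "y = 1 \<or> y = -1" using circle by (simp add: power2_eq_1_iff)
      then show ?thesis using \<open>x = 0\<close> l_eq by (auto simp: F2_eq complex_eq_iff)
    next
      case Re_sq_small: 3
      have "x^2 \<le> (1/2)^2" using 3 abs_le_square_iff[of x "1/2"] by simp
      moreover have "x^2 - y^2 = 2 * x^2 - 1" using circle by simp
      then have "(1/2)^2 \<le> x^2" using abs_le_D2[OF Re_sq_small] by (simp add: power_divide)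
      ultimately have x_sq: "x^2 = (1/2)^2" by (rule antisym)
      then have x: "x = 1/2 \<or> x = -1/2" by (simp add: power2_eq_iff)
      have "y^2 = 1 - x^2" using circle by simp
      also have "\<dots> = (sqrt 3 / 2)^2" unfolding x_sq by (simp add: power_divide)
      finally have "y^2 = (sqrt 3 / 2)^2" .
      then have "y = sqrt 3 / 2 \<or> y = - (sqrt 3 / 2)" by (simp add: power2_eq_iff)
      then show ?thesis using x l_eq by (auto simp: F3_eq zeta_def complex_eq_iff)
    qed
  qed (auto simp: F2_eq)
qed

(* A fourth root of unity i or -i times a primitive sixth or third root of unity has real
   part +-sqrt 3 / 2, so F2 and F3 cannot both contribute non-real multipliers. *)
lemma not_admissible_mixed:
  assumes l: "l \<in> F2 - F3" and l': "l' \<in> F3 - F2"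
  shows "\<not> admissible (l * l')"
proof -
  have "l \<in> {\<i>, -\<i>}" and "l' \<in> {zeta, - zeta, zeta - 1, 1 - zeta}"
    using l l' by (auto simp: F2_eq F3_eq)
  then have Re: "Re (l * l') \<in> {sqrt 3 / 2, - (sqrt 3 / 2)}" and not_pm1: "l * l' \<noteq> 1" "l * l' \<noteq> -1"
    by (auto simp: zeta_def complex_eq_iff)
  have sqrt3: "1 < sqrt (3::real)" by (simp add: real_less_rsqrt)
  have "1 / 2 < \<bar>r\<bar>" if "r \<in> {sqrt 3 / 2, - (sqrt 3 / 2)}" for r :: real
    using that sqrt3 abs_ge_self[of r] abs_ge_minus_self[of r] by (elim insertE emptyE) linarith+
  then have "1 / 2 < \<bar>Re (l * l')\<bar>" using Re by blast
  then show ?thesis using not_pm1 unfolding admissible_def by (meson not_le)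
qed

lemma shortest_nonzero_element:
  fixes X :: "'a::real_normed_vector set"
  assumes fin: "\<And>r. finite {x \<in> X. norm x \<le> r}" and x0: "x0 \<in> X" "x0 \<noteq> 0"
  obtains v where "v \<in> X" "v \<noteq> 0" "\<And>x. x \<in> X \<Longrightarrow> x \<noteq> 0 \<Longrightarrow> norm v \<le> norm x"
proof -
  define Y where "Y = {x \<in> X. norm x \<le> norm x0} - {0}"
  have "finite Y" "x0 \<in> Y" using fin x0 by (auto simp: Y_def)
  then have "Y \<noteq> {}" by blast
  define v where "v = arg_min_on norm Y"
  have "v \<in> Y" and least: "\<And>y. y \<in> Y \<Longrightarrow> norm v \<le> norm y"
    using arg_min_if_finite(1)[OF \<open>finite Y\<close> \<open>Y \<noteq> {}\<close>] arg_min_least[OF \<open>finite Y\<close> \<open>Y \<noteq> {}\<close>]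
    unfolding v_def by blast+
  have "norm v \<le> norm x" if "x \<in> X" "x \<noteq> 0" for x
  proof (cases "norm x \<le> norm x0")
    case True
    then show ?thesis using least that by (simp add: Y_def)
  next
    case False
    then show ?thesis using least[OF \<open>x0 \<in> Y\<close>] by simp
  qed
  with \<open>v \<in> Y\<close> that show ?thesis by (auto simp: Y_def)
qed

(* Compare |l v|, |v / l|, |(l - 1) v| and |(l + 1) v| with a
   shortest nonzero v in T. *)
lemma multiplier_admissible:
  fixes T :: "complex set"
  assumes diff: "\<And>x y. x \<in> T \<Longrightarrow> y \<in> T \<Longrightarrow> x - y \<in> T"
    and fin: "\<And>r. finite {t \<in> T. norm t \<le> r}"
    and nontrivial: "\<tau> \<in> T" "\<tau> \<noteq> 0"
    and l: "l \<noteq> 0" and mult: "\<And>t. t \<in> T \<Longrightarrow> l * t \<in> T" and div: "\<And>t. t \<in> T \<Longrightarrow> t / l \<in> T"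
  shows "admissible l"
proof -
  obtain v where v: "v \<in> T" "v \<noteq> 0" and shortest: "\<And>t. t \<in> T \<Longrightarrow> t \<noteq> 0 \<Longrightarrow> norm v \<le> norm t"
    using shortest_nonzero_element[OF fin nontrivial] by blast
  have expanding: "1 \<le> norm c" if "c * v \<in> T" "c \<noteq> 0" for c
  proof -
    have "norm v \<le> norm c * norm v" using shortest[OF that(1)] that(2) v(2) by (simp add: norm_mult)
    then show ?thesis using v(2) by simp
  qed
  have minus_v: "- v \<in> T" using diff[OF diff[OF v(1) v(1)] v(1)] by simp
  have "1 \<le> norm l" using expanding[of l] mult[OF v(1)] l by simp
  moreover have "1 \<le> norm (1 / l)" using expanding[of "1 / l"] div[OF v(1)] l by simp
  then have "norm l \<le> 1" using l by (simp add: norm_divide le_divide_eq)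
  ultimately have "norm l = 1" by simp
  moreover have "1 \<le> norm (l - 1)" if "l \<noteq> 1"
    using expanding[of "l - 1"] diff[OF mult[OF v(1)] v(1)] that by (simp add: algebra_simps)
  moreover have "1 \<le> norm (l + 1)" if "l \<noteq> -1"
  proof (rule expanding)
    show "(l + 1) * v \<in> T" using diff[OF mult[OF v(1)] minus_v] by (simp add: algebra_simps)
    show "l + 1 \<noteq> 0" using that by (simp add: add_eq_0_iff2)
  qed
  ultimately show ?thesis by (rule admissibleI)
qed

(* The additive subgroup Z + Z z of C.  For z = i and z = zeta these are the Gaussian and
   Eisenstein integers. *)
definition int_lattice :: "complex \<Rightarrow> complex set" where
  "int_lattice z = {of_int m + of_int n * z | m n. True}"

lemma int_lattice_one: "1 \<in> int_lattice z"
  unfolding int_lattice_def by (rule CollectI, rule exI[of _ 1], rule exI[of _ 0]) simp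

lemma int_lattice_gen: "z \<in> int_lattice z"
  unfolding int_lattice_def by (rule CollectI, rule exI[of _ 0], rule exI[of _ 1]) simp

lemma int_lattice_diff:
  assumes "x \<in> int_lattice z" "y \<in> int_lattice z"
  shows "x - y \<in> int_lattice z"
proof -
  obtain m n m' n' where "x = of_int m + of_int n * z" "y = of_int m' + of_int n' * z"
    using assms unfolding int_lattice_def by blast
  then have "x - y = of_int (m - m') + of_int (n - n') * z" by (simp add: algebra_simps)
  then show ?thesis unfolding int_lattice_def by blast
qed

lemma int_lattice_uminus: "x \<in> int_lattice z \<Longrightarrow> - x \<in> int_lattice z"
  using int_lattice_diff[OF int_lattice_diff] by fastforce

lemma int_lattice_mult:
  assumes quadratic: "z * z = of_int p + of_int q * z"
    and "x \<in> int_lattice z" "y \<in> int_lattice z"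
  shows "x * y \<in> int_lattice z"
proof -
  obtain m n m' n' where x: "x = of_int m + of_int n * z" and y: "y = of_int m' + of_int n' * z"
    using assms(2,3) unfolding int_lattice_def by blast
  have "x * y = of_int (m * m') + of_int (m * n' + n * m') * z + of_int (n * n') * (z * z)"
    unfolding x y by (simp add: algebra_simps)
  also have "\<dots> = of_int (m * m' + n * n' * p) + of_int (m * n' + n * m' + n * n' * q) * z"
    unfolding quadratic by (simp add: algebra_simps)
  finally show ?thesis unfolding int_lattice_def by blast
qed

lemma int_lattice_norm_ge_one:
  assumes integral_norm: "\<And>m n. \<exists>k::int. (cmod (of_int m + of_int n * z))^2 = of_int k"
    and w: "w \<in> int_lattice z" "w \<noteq> 0"
  shows "1 \<le> norm w"
proof -
  obtain k :: int where k: "(norm w)^2 = of_int k"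
    using w(1) integral_norm unfolding int_lattice_def by blast
  have "0 < (norm w)^2" using w(2) by simp
  then have "1 \<le> (norm w)^2" using k by simp
  then show ?thesis by (metis norm_ge_zero power2_le_imp_le one_power2)
qed

lemma gaussian_norm_ge_one: "w \<in> int_lattice \<i> \<Longrightarrow> w \<noteq> 0 \<Longrightarrow> 1 \<le> norm w"
proof (rule int_lattice_norm_ge_one)
  fix m n :: int
  show "\<exists>k::int. (cmod (of_int m + of_int n * \<i>))^2 = of_int k"
    by (rule exI[of _ "m^2 + n^2"]) (simp add: cmod_power2)
qed

lemma eisenstein_norm_ge_one: "w \<in> int_lattice zeta \<Longrightarrow> w \<noteq> 0 \<Longrightarrow> 1 \<le> norm w"
proof (rule int_lattice_norm_ge_one)
  fix m n :: int
  have "(cmod (of_int m + of_int n * zeta))^2 = (m + n / 2)^2 + (n * sqrt 3 / 2)^2"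
    by (simp add: cmod_power2 zeta_def)
  also have "\<dots> = of_int (m^2 + m * n + n^2)" by (simp add: power2_eq_square algebra_simps)
  finally show "\<exists>k::int. (cmod (of_int m + of_int n * zeta))^2 = of_int k" ..
qed

lemma zeta_sq: "zeta * zeta = zeta - 1"
  by (simp add: zeta_def complex_eq_iff)

lemma one_div_eq_if_mult_eq_one: "x * y = 1 \<Longrightarrow> 1 / x = (y :: 'a :: field)"
  using inverse_unique by (metis inverse_eq_divide)

lemma F2_units: "l \<in> F2 \<Longrightarrow> l \<in> int_lattice \<i> \<and> 1 / l \<in> int_lattice \<i>"
  using int_lattice_one int_lattice_gen int_lattice_uminus[OF int_lattice_one]
    int_lattice_uminus[OF int_lattice_gen] by (auto simp: F2_eq)

lemma F3_units: "l \<in> F3 \<Longrightarrow> l \<in> int_lattice zeta \<and> 1 / l \<in> int_lattice zeta"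
proof -
  have members: "1 \<in> int_lattice zeta" "zeta \<in> int_lattice zeta" "-1 \<in> int_lattice zeta"
    "- zeta \<in> int_lattice zeta" "zeta - 1 \<in> int_lattice zeta" "1 - zeta \<in> int_lattice zeta"
    using int_lattice_one int_lattice_gen int_lattice_uminus int_lattice_diff by blast+
  have "1 / zeta = 1 - zeta" "1 / (1 - zeta) = zeta" "1 / (- zeta) = zeta - 1" "1 / (zeta - 1) = - zeta"
    by (rule one_div_eq_if_mult_eq_one; simp add: right_diff_distrib left_diff_distrib zeta_sq)+
  with members show "l \<in> F3 \<Longrightarrow> ?thesis" by (auto simp: F3_eq)
qed

lemma lattice_line_uniform_discrete:
  fixes a d :: "complex^'n"
  assumes d: "d \<noteq> 0" and diff: "\<And>x y. x \<in> L \<Longrightarrow> y \<in> L \<Longrightarrow> x - y \<in> L"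
    and norm_bound: "\<And>w. w \<in> L \<Longrightarrow> w \<noteq> 0 \<Longrightarrow> 1 \<le> norm w"
  shows "uniform_discrete {a + s *s d | s. s \<in> L}"
proof (rule uniformI2)
  show "0 < norm d" using d by simp
  fix x y assume "x \<in> {a + s *s d | s. s \<in> L}" "y \<in> {a + s *s d | s. s \<in> L}" "x \<noteq> y"
  then obtain s s' where s: "s \<in> L" "s' \<in> L" "s \<noteq> s'" and xy: "x = a + s *s d" "y = a + s' *s d"
    by auto
  have "x - y = (s - s') *s d" unfolding xy by (simp add: vec_eq_iff algebra_simps)
  then have "dist x y = norm ((s - s') *s d)" by (simp only: dist_norm)
  also have "\<dots> = norm (s - s') * norm d" by (rule norm_smult_vec)
  finally have "dist x y = norm (s - s') * norm d" .
  moreover have "1 \<le> norm (s - s')" using norm_bound diff s by simp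
  ultimately show "norm d \<le> dist x y" by (simp add: mult_le_cancel_right1)
qed

lemma closed_discrete_Int_cball_finite:
  fixes S :: "'a::heine_borel set"
  assumes "closed S" and "discrete S"
  shows "finite (S \<inter> cball x r)"
proof -
  have "compact (S \<inter> cball x r)" using assms(1) by (simp add: closed_Int_compact)
  moreover have "discrete (S \<inter> cball x r)" using assms(2) by (rule discrete_subset) auto
  ultimately show ?thesis using discrete_compact_finite_iff by blast
qed

lemma cis_non_integer_multiple_of_pi_ne_1:
  assumes "q \<notin> \<int>"
  shows "exp (\<i> * complex_of_real (pi * q)) \<noteq> 1"
proof
  assume "exp (\<i> * complex_of_real (pi * q)) = 1"
  then have "cis (q * pi) = 1" by (simp add: cis_conv_exp mult.commute)
  then have "sin (q * pi) = 0" using cis.sel(2)[of "q * pi"] by simp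
  with assms show False by (simp add: sin_times_pi_eq_0)
qed

(* Its elements are the line maps along b - a whose parameters are recorded in
   shifts (pure translations t: z |-> z + t (b - a)) and multipliers. *)
locale two_dilations =
  fixes a b :: "complex^'n" and \<omega> \<mu> :: complex
  assumes distinct_centres: "a \<noteq> b" and \<omega>_nz: "\<omega> \<noteq> 0" and \<mu>_nz: "\<mu> \<noteq> 0"
begin

definition G :: "(complex^'n \<Rightarrow> complex^'n) set" where
  "G = gen_group {dil a \<omega>, dil b \<mu>}"

definition orbit :: "(complex^'n) set" where
  "orbit = (\<lambda>h. h a) ` G"

definition shifts :: "complex set" where
  "shifts = {t. line_map a (b - a) 1 t \<in> G}"

definition multipliers :: "complex set" where
  "multipliers = {l. \<exists>s. line_map a (b - a) l s \<in> G}"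

lemma direction_nz: "b - a \<noteq> 0"
  using distinct_centres by simp

lemma G_line_maps: "G = gen_group {line_map a (b - a) \<omega> 0, line_map a (b - a) \<mu> (1 - \<mu>)}"
  by (simp add: G_def dil_as_line_map(1)[of a \<omega> b] dil_as_line_map(2)[of b \<mu> a])

lemma generators_in_G: "line_map a (b - a) \<omega> 0 \<in> G" "line_map a (b - a) \<mu> (1 - \<mu>) \<in> G"
  by (simp_all add: G_line_maps gen_group.gen_base)

lemma G_induct:
  assumes "h \<in> G" and "P 1 0" "P \<omega> 0" "P \<mu> (1 - \<mu>)" "P (1 / \<omega>) 0" "P (1 / \<mu>) (1 - 1 / \<mu>)"
    and "\<And>l s l' s'. P l s \<Longrightarrow> P l' s' \<Longrightarrow> P (l * l') (l * s' + s)"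
  obtains l s where "h = line_map a (b - a) l s" "P l s"
proof -
  have "- (1 - \<mu>) / \<mu> = 1 - 1 / \<mu>" using \<mu>_nz by (simp add: field_simps)
  then have inv_\<mu>: "P (1 / \<mu>) (- (1 - \<mu>) / \<mu>)" using assms(6) by (simp only:)
  have inv_\<omega>: "P (1 / \<omega>) (- 0 / \<omega>)" using assms(5) by simp
  have "h \<in> gen_group {line_map a (b - a) \<omega> 0, line_map a (b - a) \<mu> (1 - \<mu>)}"
    using assms(1) by (simp only: G_line_maps)
  from gen_group_line_maps[OF \<omega>_nz \<mu>_nz assms(2,3,4) inv_\<omega> inv_\<mu> assms(7) this]
  obtain l s where "h = line_map a (b - a) l s" "P l s" .
  then show ?thesis by (rule that)
qed

lemma G_elem:
  assumes "h \<in> G"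
  obtains l s where "l \<noteq> 0" "h = line_map a (b - a) l s"
proof (rule G_induct[OF assms, of "\<lambda>l s. l \<noteq> 0"])
  fix l s assume "h = line_map a (b - a) l s" "l \<noteq> 0"
  then show thesis by (intro that)
qed (use \<omega>_nz \<mu>_nz in simp_all)

lemma line_map_comp_in_G:
  assumes "line_map a (b - a) l s \<in> G" "line_map a (b - a) l' s' \<in> G"
  shows "line_map a (b - a) (l * l') (l * s' + s) \<in> G"
proof -
  have "line_map a (b - a) l s \<circ> line_map a (b - a) l' s' \<in> G"
    using assms unfolding G_def by (rule gen_group.gen_comp)
  then show ?thesis by (simp only: line_map_comp)
qed

lemma line_map_inv_in_G:
  assumes "line_map a (b - a) l s \<in> G"
  shows "l \<noteq> 0" and "line_map a (b - a) (1 / l) (- s / l) \<in> G"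
proof -
  obtain l' s' where "l' \<noteq> 0" and eq: "line_map a (b - a) l s = line_map a (b - a) l' s'"
    by (rule G_elem[OF assms])
  from eq have "l = l'" by (simp add: line_map_eq_iff[OF direction_nz])
  with \<open>l' \<noteq> 0\<close> show "l \<noteq> 0" by simp
  have "inv (line_map a (b - a) l s)
      \<in> gen_group {line_map a (b - a) \<omega> 0, line_map a (b - a) \<mu> (1 - \<mu>)}"
  proof (rule gen_group_inv_closed)
    show "bij h" if "h \<in> {line_map a (b - a) \<omega> 0, line_map a (b - a) \<mu> (1 - \<mu>)}" for h
      using that \<omega>_nz \<mu>_nz bij_line_map by blast
    show "line_map a (b - a) l s \<in> gen_group {line_map a (b - a) \<omega> 0, line_map a (b - a) \<mu> (1 - \<mu>)}"
      using assms by (simp only: G_line_maps)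
  qed
  then show "line_map a (b - a) (1 / l) (- s / l) \<in> G"
    by (simp only: inv_line_map[OF \<open>l \<noteq> 0\<close>] G_line_maps)
qed

lemma shifts_diff:
  assumes "t \<in> shifts" "t' \<in> shifts"
  shows "t - t' \<in> shifts"
  using line_map_comp_in_G[OF assms(1)[unfolded shifts_def, simplified]
      line_map_inv_in_G(2)[OF assms(2)[unfolded shifts_def, simplified]]]
  by (simp add: shifts_def)

(* ... which is invariant under multiplication by every multiplier (conjugation). *)
lemma shifts_mult:
  assumes l: "l \<in> multipliers" and t: "t \<in> shifts"
  shows "l * t \<in> shifts"
proof -
  obtain s where ls: "line_map a (b - a) l s \<in> G" using l by (auto simp: multipliers_def)
  then have l_nz: "l \<noteq> 0" by (rule line_map_inv_in_G(1))
  have "line_map a (b - a) (l * 1 * (1 / l)) (l * 1 * (- s / l) + (l * t + s)) \<in> G"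
    using t line_map_inv_in_G(2)[OF ls]
    by (intro line_map_comp_in_G ls) (simp_all add: shifts_def)
  then show ?thesis using l_nz by (simp add: shifts_def)
qed

lemma multipliers_inverse: "l \<in> multipliers \<Longrightarrow> l \<noteq> 0 \<and> 1 / l \<in> multipliers"
  using line_map_inv_in_G unfolding multipliers_def by blast

lemma multipliers_mult: "l \<in> multipliers \<Longrightarrow> l' \<in> multipliers \<Longrightarrow> l * l' \<in> multipliers"
  using line_map_comp_in_G unfolding multipliers_def by blast

lemma commutator_shift: "(\<omega> - 1) * (1 - \<mu>) \<in> shifts"
proof -
  note f = generators_in_G(1) and g = generators_in_G(2)
  have "line_map a (b - a) (\<omega> * \<mu> * (1 / \<omega>) * (1 / \<mu>))
      (\<omega> * \<mu> * (1 / \<omega>) * (- (1 - \<mu>) / \<mu>) + (\<omega> * \<mu> * (- 0 / \<omega>) + (\<omega> * (1 - \<mu>) + 0))) \<in> G"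
    by (intro line_map_comp_in_G f g line_map_inv_in_G(2))
  moreover have "\<omega> * \<mu> * (1 / \<omega>) * (1 / \<mu>) = 1"
    and "\<omega> * \<mu> * (1 / \<omega>) * (- (1 - \<mu>) / \<mu>) + (\<omega> * \<mu> * (- 0 / \<omega>) + (\<omega> * (1 - \<mu>) + 0))
      = (\<omega> - 1) * (1 - \<mu>)"
    using \<omega>_nz \<mu>_nz by (simp_all add: field_simps)
  ultimately show ?thesis by (simp add: shifts_def)
qed

(* If the orbit G(a) is closed and discrete, the shifts are finite on every ball, since
   t |-> a + t (b - a) embeds them into G(a). *)
lemma shifts_finite:
  assumes "closed orbit" "discrete orbit"
  shows "finite {t \<in> shifts. norm t \<le> r}"
proof -
  let ?p = "\<lambda>t. a + t *s (b - a)"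
  have "?p ` {t \<in> shifts. norm t \<le> r} \<subseteq> orbit \<inter> cball a (r * norm (b - a))"
  proof clarify
    fix t assume "t \<in> shifts" "norm t \<le> r"
    then have "?p t \<in> orbit"
      unfolding orbit_def shifts_def by (metis (mono_tags) line_map_base image_eqI mem_Collect_eq)
    moreover have "dist a (?p t) \<le> r * norm (b - a)"
    proof -
      have "dist a (?p t) = dist (a + 0) (a + t *s (b - a))" by simp
      also have "\<dots> = norm (t *s (b - a))" by (simp only: dist_add_cancel dist_0_norm)
      also have "\<dots> = norm t * norm (b - a)" by (rule norm_smult_vec)
      also have "\<dots> \<le> r * norm (b - a)" using \<open>norm t \<le> r\<close> by (simp add: mult_right_mono)
      finally show ?thesis .
    qed
    ultimately show "?p t \<in> orbit \<inter> cball a (r * norm (b - a))" by simp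
  qed
  moreover have "finite (orbit \<inter> cball a (r * norm (b - a)))"
    using closed_discrete_Int_cball_finite[OF assms] .
  moreover have "inj ?p"
    by (rule injI) (use direction_nz in \<open>simp only: add_left_cancel vector_mul_rcancel simp_thms\<close>)
  ultimately show ?thesis by (meson finite_imageD finite_subset inj_on_subset subset_UNIV)
qed

(* Every multiplier is admissible: apply the key estimate to the shifts, made nontrivial
   by the commutator. *)
lemma multipliers_admissible:
  assumes "closed orbit" "discrete orbit" "\<omega> \<noteq> 1" "\<mu> \<noteq> 1" and l: "l \<in> multipliers"
  shows "admissible l"
proof (rule multiplier_admissible)
  show "(\<omega> - 1) * (1 - \<mu>) \<in> shifts" "(\<omega> - 1) * (1 - \<mu>) \<noteq> 0"
    using commutator_shift assms(3,4) by auto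
  show "l \<noteq> 0" using multipliers_inverse[OF l] by blast
  show "t / l \<in> shifts" if "t \<in> shifts" for t
    using shifts_mult[OF _ that, of "1 / l"] multipliers_inverse[OF l] by simp
qed (use assms shifts_diff shifts_finite shifts_mult in auto)

lemma multipliers_classified:
  assumes "closed orbit" "discrete orbit" "\<omega> \<noteq> 1" "\<mu> \<noteq> 1"
  shows "multipliers \<subseteq> F2 \<or> multipliers \<subseteq> F3"
proof (rule ccontr)
  note admissible = multipliers_admissible[OF assms]
  have F23: "l \<in> F2 \<union> F3" if "l \<in> multipliers" for l
    using admissible_square admissible[OF that] admissible[OF multipliers_mult[OF that that]]
    by (simp add: power2_eq_square)
  assume "\<not> ?thesis"
  then obtain l l' where l: "l \<in> multipliers" "l \<notin> F2" and l': "l' \<in> multipliers" "l' \<notin> F3"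
    by blast
  have "\<not> admissible (l' * l)"
    using F23[OF l(1)] F23[OF l'(1)] l(2) l'(2) by (intro not_admissible_mixed) auto
  with admissible[OF multipliers_mult[OF l'(1) l(1)]] show False by blast
qed

lemma G_subset_SR_iff: "G \<subseteq> SR F \<longleftrightarrow> multipliers \<subseteq> F"
proof
  assume "G \<subseteq> SR F"
  then show "multipliers \<subseteq> F"
    using line_map_in_SR_iff[OF direction_nz] unfolding multipliers_def by blast
next
  assume F: "multipliers \<subseteq> F"
  show "G \<subseteq> SR F"
  proof
    fix h assume "h \<in> G"
    then obtain l s where "h = line_map a (b - a) l s" using G_elem by metis
    with \<open>h \<in> G\<close> F show "h \<in> SR F"
      using line_map_in_SR_iff[OF direction_nz] unfolding multipliers_def by blast
  qed
qed

lemma orbit_uniform_discrete: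
  assumes quadratic: "z * z = of_int p + of_int q * z"
    and norm_bound: "\<And>w. w \<in> int_lattice z \<Longrightarrow> w \<noteq> 0 \<Longrightarrow> 1 \<le> norm w"
    and units: "\<omega> \<in> int_lattice z" "1 / \<omega> \<in> int_lattice z" "\<mu> \<in> int_lattice z" "1 / \<mu> \<in> int_lattice z"
  shows "uniform_discrete orbit"
proof -
  let ?L = "int_lattice z"
  have add: "x + y \<in> ?L" if "x \<in> ?L" "y \<in> ?L" for x y
    using int_lattice_diff[OF that(1) int_lattice_uminus[OF that(2)]] by simp
  have zero: "0 \<in> ?L" using int_lattice_diff[OF int_lattice_one int_lattice_one] by simp
  have "orbit \<subseteq> {a + s *s (b - a) | s. s \<in> ?L}"
  proof
    fix x assume "x \<in> orbit"
    then obtain h where "h \<in> G" "x = h a" by (auto simp: orbit_def)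
    moreover obtain l s where "h = line_map a (b - a) l s" "l \<in> ?L \<and> s \<in> ?L"
    proof (rule G_induct[OF \<open>h \<in> G\<close>, of "\<lambda>l s. l \<in> ?L \<and> s \<in> ?L"])
      show "1 \<in> ?L \<and> 0 \<in> ?L" "\<omega> \<in> ?L \<and> 0 \<in> ?L" "1 / \<omega> \<in> ?L \<and> 0 \<in> ?L"
        using int_lattice_one zero units by simp_all
      show "\<mu> \<in> ?L \<and> 1 - \<mu> \<in> ?L" "1 / \<mu> \<in> ?L \<and> 1 - 1 / \<mu> \<in> ?L"
        using int_lattice_one int_lattice_diff units by blast+
      show "l * l' \<in> ?L \<and> l * s' + s \<in> ?L" if "l \<in> ?L \<and> s \<in> ?L" "l' \<in> ?L \<and> s' \<in> ?L" for l s l' s'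
        using that add int_lattice_mult[OF quadratic] by blast
    qed
    ultimately show "x \<in> {a + s *s (b - a) | s. s \<in> ?L}" by (auto simp: line_map_base)
  qed
  moreover have "uniform_discrete {a + s *s (b - a) | s. s \<in> ?L}"
    using lattice_line_uniform_discrete[OF direction_nz int_lattice_diff norm_bound] by blast
  ultimately show ?thesis by (rule uniform_discrete_subset[rotated])
qed

lemma orbit_closed_discrete_iff:
  assumes "\<omega> \<noteq> 1" "\<mu> \<noteq> 1"
  shows "closed orbit \<and> discrete orbit \<longleftrightarrow> G \<subseteq> SR F2 \<or> G \<subseteq> SR F3"
proof
  assume "closed orbit \<and> discrete orbit"
  then show "G \<subseteq> SR F2 \<or> G \<subseteq> SR F3"
    using multipliers_classified assms G_subset_SR_iff by blast
next
  have generators: "\<omega> \<in> multipliers" "\<mu> \<in> multipliers"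
    using generators_in_G unfolding multipliers_def by blast+
  assume "G \<subseteq> SR F2 \<or> G \<subseteq> SR F3"
  then have "\<omega> \<in> F2 \<and> \<mu> \<in> F2 \<or> \<omega> \<in> F3 \<and> \<mu> \<in> F3"
    using generators G_subset_SR_iff by blast
  then have "uniform_discrete orbit"
  proof
    assume "\<omega> \<in> F2 \<and> \<mu> \<in> F2"
    then show ?thesis using F2_units gaussian_norm_ge_one
      by (intro orbit_uniform_discrete[of \<i> "-1" 0]) auto
  next
    assume "\<omega> \<in> F3 \<and> \<mu> \<in> F3"
    moreover have "zeta * zeta = of_int (-1) + of_int 1 * zeta" using zeta_sq by simp
    ultimately show ?thesis using F3_units eisenstein_norm_ge_one
      by (intro orbit_uniform_discrete[of zeta "-1" 1]) auto
  qed
  then show "closed orbit \<and> discrete orbit"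
    by (simp add: uniform_discrete_imp_closed uniform_discrete_imp_discrete)
qed

end

theorem proposition3p4:
  fixes \<theta> :: real and \<mu> :: complex and a b :: "complex ^ 'n"
  assumes "\<theta> \<in> (\<lambda>q. pi * q) ` (\<rat> - \<int>)"
    and "\<mu> \<noteq> 0" and "\<mu> \<noteq> 1"
    and "a \<noteq> b"
  shows "(let G = gen_group {dil a (exp (\<i> * complex_of_real \<theta>)), dil b \<mu>};
              Ga = (\<lambda>h. h a) ` G
          in closed Ga \<and> discrete Ga)
         \<longleftrightarrow> (gen_group {dil a (exp (\<i> * complex_of_real \<theta>)), dil b \<mu>} \<subseteq> SR F2
              \<or> gen_group {dil a (exp (\<i> * complex_of_real \<theta>)), dil b \<mu>} \<subseteq> SR F3)"
proof -
  have rotation_ne_1: "exp (\<i> * complex_of_real \<theta>) \<noteq> 1"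
    using assms(1) cis_non_integer_multiple_of_pi_ne_1 by blast
  interpret two_dilations a b "exp (\<i> * complex_of_real \<theta>)" \<mu>
    using assms(2,4) by unfold_locales simp_all
  have "closed orbit \<and> discrete orbit \<longleftrightarrow> G \<subseteq> SR F2 \<or> G \<subseteq> SR F3"
    using orbit_closed_discrete_iff rotation_ne_1 assms(3) .
  then show ?thesis unfolding orbit_def G_def Let_def .
qed

end
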